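(* Let $f \in \mathbb{C}[x_1,\dots,x_n]_d$. If $f$ has a local border decomposition with $r$ summands and base $[\ell]$, then $f$ has a standard local border decomposition with the same base $[\ell]$ and the same number $r$ of summands.
   Context: Let $\mathbb{C}(\epsilon)[\boldsymbol{x}]_1$ be the set of linear forms in $x_1,\dots,x_n$ with coefficients rational functions of $\epsilon$. A nonzero $\ell(\epsilon)\in\mathbb{C}(\epsilon)[\boldsymbol{x}]_1$ can be expanded as a Laurent series $\ell(\epsilon)=\sum_{i\ge q}\epsilon^i \ell_i$ with $\ell_i\in\mathbb{C}[\boldsymbol{x}]_1$, $\ell_q\neq 0$; its projective limit is $\lim_{\epsilon\to0}[\ell(\epsilon)] := [\ell_q]$, a point of the projective space of lines in $\mathbb{C}[\boldsymbol{x}]_1$. A border Waring rank decomposition of $f$ is an expression $f=\lim_{\epsilon\to0}\sum_{k=1}^r \ell_k^d$ with $\ell_k\in\mathbb{C}(\epsilon)[\boldsymbol{x}]_1$ (limit taken coefficientwise). It is a local border decomposition with base $[\ell]$ (for a nonzero $\ell\in\mathbb{C}[\boldsymbol{x}]_1$) if $\lim_{\epsilon\to0}[\ell_k(\epsilon)]=[\ell]$ for all $k=1,\dots,r$. A local border decomposition with base $[\ell]$ is standard if $\ell_1=\epsilon^q\gamma\ell$ for some $q\in\mathbb{Z}$ and $\gamma\in\mathbb{C}$. *)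

theory Defs
  imports "HOL-Computational_Algebra.Formal_Laurent_Series" "HOL-Computational_Algebra.Polynomial_FPS"
begin

text \<open>The field C(eps) of rational functions in eps, viewed inside the field of formal Laurent
  series C((eps)) via Laurent expansion at eps = 0: a Laurent series is rational iff
  multiplying it by some nonzero polynomial gives a polynomial.\<close>
definition rational_fls :: "complex fls \<Rightarrow> bool" where
  "rational_fls a \<longleftrightarrow> (\<exists>p q :: complex poly. q \<noteq> 0 \<and>
      a * fps_to_fls (fps_of_poly q) = fps_to_fls (fps_of_poly p))"

definition rat_linform :: "('n \<Rightarrow> complex fls) \<Rightarrow> bool" where
  "rat_linform L \<longleftrightarrow> (\<forall>i. rational_fls (L i))"

definition lf_eval :: "('n::finite \<Rightarrow> complex fls) \<Rightarrow> ('n \<Rightarrow> complex) \<Rightarrow> complex fls" where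
  "lf_eval L v = (\<Sum>i\<in>UNIV. L i * fls_const (v i))"

text \<open>Projective limit: lim [L(eps)] = [l].  Writing L = sum_{i>=q} eps^i L_i with L_q ~= 0,
  this says L_q = c l for some nonzero c.\<close>
definition proj_lim_is :: "('n \<Rightarrow> complex fls) \<Rightarrow> ('n \<Rightarrow> complex) \<Rightarrow> bool" where
  "proj_lim_is L l \<longleftrightarrow> l \<noteq> (\<lambda>_. 0) \<and>
     (\<exists>q::int. \<exists>c::complex. c \<noteq> 0 \<and> (\<forall>i. \<forall>m<q. fls_nth (L i) m = 0) \<and>
        (\<forall>i. fls_nth (L i) q = c * l i))"

text \<open>f = lim_{eps->0} sum_{k=1}^r L_k(eps)^d, with f a form of degree d represented by its
  polynomial function on C^n.  The limit is taken coefficientwise, which (over the infinite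
  field C) is the same as: at every point v, the Laurent series sum_k L_k(eps)(v)^d has no
  negative-degree terms and constant term f v.\<close>
definition border_limit ::
  "(('n::finite \<Rightarrow> complex) \<Rightarrow> complex) \<Rightarrow> nat \<Rightarrow> nat \<Rightarrow> (nat \<Rightarrow> 'n \<Rightarrow> complex fls) \<Rightarrow> bool" where
  "border_limit f d r Ls \<longleftrightarrow> (\<forall>v.
     (\<forall>m<0. fls_nth (\<Sum>k\<in>{1..r}. (lf_eval (Ls k) v) ^ d) m = 0) \<and>
     fls_nth (\<Sum>k\<in>{1..r}. (lf_eval (Ls k) v) ^ d) 0 = f v)"

definition local_border_decomp ::
  "(('n::finite \<Rightarrow> complex) \<Rightarrow> complex) \<Rightarrow> nat \<Rightarrow> nat \<Rightarrow> (nat \<Rightarrow> 'n \<Rightarrow> complex fls)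
     \<Rightarrow> ('n \<Rightarrow> complex) \<Rightarrow> bool" where
  "local_border_decomp f d r Ls l \<longleftrightarrow>
     (\<forall>k\<in>{1..r}. rat_linform (Ls k)) \<and> border_limit f d r Ls \<and>
     (\<forall>k\<in>{1..r}. proj_lim_is (Ls k) l)"

definition standard_first :: "(nat \<Rightarrow> 'n \<Rightarrow> complex fls) \<Rightarrow> ('n \<Rightarrow> complex) \<Rightarrow> bool" where
  "standard_first Ls l \<longleftrightarrow> (\<exists>q::int. \<exists>\<gamma>::complex.
     Ls 1 = (\<lambda>i. fls_X_intpow q * fls_const (\<gamma> * l i)))"

end

theory Submission
  imports Defs
begin

text \<open>Pick a coordinate j with l j \<noteq> 0 and write L_1 = eps^q c l + D with D of order > q.
  Substituting x - (D(x) / L_1 j) e_j for x in every summand turns L_1 into eps^q c l.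
  The correction term has positive order, so it changes neither the leading terms of the
  summands nor the coefficients of order \<le> 0 of \<Sum>_k L_k^d: expanding in the
  correction, the coefficient of its m-th power is the coefficient of \<sigma>^m in
  \<Sum>_k L_k(x + \<sigma> e_j)^d, which has no negative-order terms because the original
  decomposition is a border decomposition at every point x + \<sigma> e_j.\<close>

abbreviation fls_of_poly :: "complex poly \<Rightarrow> complex fls" where
  "fls_of_poly p \<equiv> fps_to_fls (fps_of_poly p)"

lemma fls_of_poly_mult: "fls_of_poly (p * q) = fls_of_poly p * fls_of_poly q"
  by (simp add: fps_of_poly_mult fls_times_fps_to_fls)

lemma fls_of_poly_add: "fls_of_poly (p + q) = fls_of_poly p + fls_of_poly q"
  by (simp add: fps_of_poly_add)

lemma rational_flsE:
  assumes "rational_fls a"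
  obtains p q where "q \<noteq> 0" "a * fls_of_poly q = fls_of_poly p"
  using assms unfolding rational_fls_def by blast

lemma rational_flsI: "q \<noteq> 0 \<Longrightarrow> a * fls_of_poly q = fls_of_poly p \<Longrightarrow> rational_fls a"
  unfolding rational_fls_def by blast

lemma rational_fls_of_poly: "rational_fls (fls_of_poly p)"
  by (rule rational_flsI[of 1]) simp_all

lemma rational_fls_const: "rational_fls (fls_const c)"
  using rational_fls_of_poly[of "[:c:]"] by (simp add: fps_of_poly_const)

lemma rational_fls_X: "rational_fls fls_X"
  using rational_fls_of_poly[of "[:0, 1:]"] by simp

lemma rational_fls_mult:
  assumes "rational_fls a" "rational_fls b"
  shows "rational_fls (a * b)"
proof -
  obtain p1 q1 where 1: "q1 \<noteq> 0" "a * fls_of_poly q1 = fls_of_poly p1"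
    using assms(1) by (rule rational_flsE)
  obtain p2 q2 where 2: "q2 \<noteq> 0" "b * fls_of_poly q2 = fls_of_poly p2"
    using assms(2) by (rule rational_flsE)
  have "a * b * fls_of_poly (q1 * q2) = fls_of_poly (p1 * p2)"
    by (simp add: fls_of_poly_mult algebra_simps flip: 1(2) 2(2))
  then show ?thesis using 1 2 by (intro rational_flsI) simp_all
qed

lemma rational_fls_add:
  assumes "rational_fls a" "rational_fls b"
  shows "rational_fls (a + b)"
proof -
  obtain p1 q1 where 1: "q1 \<noteq> 0" "a * fls_of_poly q1 = fls_of_poly p1"
    using assms(1) by (rule rational_flsE)
  obtain p2 q2 where 2: "q2 \<noteq> 0" "b * fls_of_poly q2 = fls_of_poly p2"
    using assms(2) by (rule rational_flsE)
  have "(a + b) * fls_of_poly (q1 * q2) = fls_of_poly (p1 * q2 + p2 * q1)"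
    by (simp add: fls_of_poly_mult fls_of_poly_add algebra_simps flip: 1(2) 2(2))
  then show ?thesis using 1 2 by (intro rational_flsI) simp_all
qed

lemma rational_fls_diff:
  assumes "rational_fls a" "rational_fls b"
  shows "rational_fls (a - b)"
  using rational_fls_add[OF assms(1) rational_fls_mult[OF rational_fls_const[of "-1"] assms(2)]]
  by simp

lemma rational_fls_inverse:
  assumes "rational_fls a"
  shows "rational_fls (inverse a)"
proof (cases "a = 0")
  case True
  then show ?thesis using rational_fls_const[of 0] by simp
next
  case False
  obtain p q where pq: "q \<noteq> 0" "a * fls_of_poly q = fls_of_poly p"
    using assms by (rule rational_flsE)
  then have "p \<noteq> 0" using False by auto
  moreover have "inverse a * fls_of_poly p = fls_of_poly q"
    using False by (simp flip: pq(2))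
  ultimately show ?thesis by (rule rational_flsI)
qed

lemma rational_fls_divide:
  "rational_fls a \<Longrightarrow> rational_fls b \<Longrightarrow> rational_fls (a / b)"
  by (simp add: divide_inverse rational_fls_mult rational_fls_inverse)

lemma rational_fls_power: "rational_fls a \<Longrightarrow> rational_fls (a ^ n)"
  by (induction n) (simp_all add: rational_fls_mult rational_fls_const[of 1, simplified])

lemma rational_fls_X_intpow: "rational_fls (fls_X_intpow q :: complex fls)"
  unfolding fls_X_power_int[symmetric] power_int_def
  by (simp add: rational_fls_power rational_fls_inverse rational_fls_X)

definition vanishes_below :: "int \<Rightarrow> 'a::zero fls \<Rightarrow> bool" where
  "vanishes_below N X \<longleftrightarrow> (\<forall>m<N. fls_nth X m = 0)"

lemma vanishes_below_iff: "vanishes_below N X \<longleftrightarrow> X = 0 \<or> N \<le> fls_subdegree X"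
  unfolding vanishes_below_def using fls_subdegree_geI by fastforce

lemma vanishes_below_sum:
  "(\<And>i. i \<in> A \<Longrightarrow> vanishes_below N (g i)) \<Longrightarrow> vanishes_below N (\<Sum>i\<in>A. g i)"
  unfolding vanishes_below_def by (simp add: fls_nth_sum)

lemma vanishes_below_mult_const:
  fixes X :: "'a::{comm_monoid_add,mult_zero} fls"
  shows "vanishes_below N X \<Longrightarrow> vanishes_below N (X * fls_const a)"
  unfolding vanishes_below_def by simp

lemma vanishes_below_mult:
  fixes X Y :: "'a::semiring_no_zero_divisors fls"
  shows "vanishes_below M X \<Longrightarrow> vanishes_below N Y \<Longrightarrow> vanishes_below (M + N) (X * Y)"
  unfolding vanishes_below_iff by (cases "X = 0 \<or> Y = 0") auto

lemma vanishes_below_power: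
  fixes X :: "'a::semiring_1_no_zero_divisors fls"
  assumes "vanishes_below N X"
  shows "vanishes_below (int n * N) (X ^ n)"
proof (induction n)
  case 0
  then show ?case by (simp add: vanishes_below_def)
next
  case (Suc n)
  then show ?case
    using vanishes_below_mult[OF assms Suc.IH] by (simp add: algebra_simps)
qed

lemma vanishes_below_divide:
  fixes A B :: "'a::division_ring fls"
  assumes "vanishes_below N A" "B \<noteq> 0"
  shows "vanishes_below (N - fls_subdegree B) (A / B)"
proof (cases "A = 0")
  case False
  then show ?thesis
    using assms unfolding vanishes_below_iff by (simp add: fls_divide_subdegree)
qed (simp add: vanishes_below_def)

lemma vanishes_below_poly_coeffs:
  fixes Q :: "nat \<Rightarrow> 'a::{idom,real_normed_div_algebra} fls"
  assumes "\<And>\<sigma>. vanishes_below N (\<Sum>m\<le>d. fls_const \<sigma> ^ m * Q m)" and "m \<le> d"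
  shows "vanishes_below N (Q m)"
  unfolding vanishes_below_def
proof (intro allI impI)
  fix e assume "e < N"
  have "fls_nth (\<Sum>i\<le>d. fls_const \<sigma> ^ i * Q i) e = (\<Sum>i\<le>d. fls_nth (Q i) e * \<sigma> ^ i)"
    for \<sigma>
    by (simp add: fls_nth_sum mult.commute flip: fls_const_power)
  then have "\<forall>\<sigma>. (\<Sum>i\<le>d. fls_nth (Q i) e * \<sigma> ^ i) = 0"
    using assms(1) \<open>e < N\<close> unfolding vanishes_below_def by metis
  then show "fls_nth (Q m) e = 0"
    using assms(2) by (simp add: polyfun_eq_0)
qed

lemma sum_power_add_mult_binomial:
  fixes x y :: "'k \<Rightarrow> 'a::comm_semiring_1"
  shows "(\<Sum>k\<in>K. (x k + s * y k) ^ d) =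
     (\<Sum>m\<le>d. s ^ m * (\<Sum>k\<in>K. of_nat (d choose m) * y k ^ m * x k ^ (d - m)))"
proof -
  have "(\<Sum>k\<in>K. (x k + s * y k) ^ d) = (\<Sum>k\<in>K. (s * y k + x k) ^ d)"
    by (simp add: add.commute)
  also have "\<dots> = (\<Sum>k\<in>K. \<Sum>m\<le>d. of_nat (d choose m) * (s * y k) ^ m * x k ^ (d - m))"
    by (simp add: binomial_ring)
  also have "\<dots> = (\<Sum>m\<le>d. s ^ m * (\<Sum>k\<in>K. of_nat (d choose m) * y k ^ m * x k ^ (d - m)))"
    by (subst sum.swap) (simp add: sum_distrib_left power_mult_distrib algebra_simps)
  finally show ?thesis .
qed

lemma power_sum_perturb_low_coeffs:
  fixes x y :: "'k \<Rightarrow> 'a::{idom,real_normed_div_algebra} fls"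
  assumes no_poles: "\<And>\<sigma>. vanishes_below 0 (\<Sum>k\<in>K. (x k + fls_const \<sigma> * y k) ^ d)"
    and t: "vanishes_below 1 t" and "e \<le> 0"
  shows "fls_nth (\<Sum>k\<in>K. (x k + t * y k) ^ d) e = fls_nth (\<Sum>k\<in>K. x k ^ d) e"
proof -
  define Q where "Q m = (\<Sum>k\<in>K. of_nat (d choose m) * y k ^ m * x k ^ (d - m))" for m
  have "vanishes_below 0 (Q m)" if "m \<le> d" for m
  proof (rule vanishes_below_poly_coeffs[OF _ that])
    show "vanishes_below 0 (\<Sum>m\<le>d. fls_const \<sigma> ^ m * Q m)" for \<sigma>
      using no_poles[of \<sigma>] unfolding sum_power_add_mult_binomial Q_def .
  qed
  then have "vanishes_below (int m * 1 + 0) (t ^ m * Q m)" if "m \<le> d" for m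
    using that by (intro vanishes_below_mult vanishes_below_power t)
  then have "fls_nth (t ^ m * Q m) e = (if m = 0 then fls_nth (Q 0) e else 0)" if "m \<le> d" for m
    using that \<open>e \<le> 0\<close> by (auto simp: vanishes_below_def)
  then have "fls_nth (\<Sum>m\<le>d. t ^ m * Q m) e = fls_nth (Q 0) e"
    by (simp add: fls_nth_sum)
  then show ?thesis
    unfolding sum_power_add_mult_binomial Q_def by simp
qed

text \<open>The linear form L(x) after substituting x - C(x) e_j for x.\<close>
definition subst_var :: "('n \<Rightarrow> 'a::ring fls) \<Rightarrow> 'n \<Rightarrow> ('n \<Rightarrow> 'a fls) \<Rightarrow> 'n \<Rightarrow> 'a fls" where
  "subst_var L j C = (\<lambda>i. L i - L j * C i)"

lemma subst_var_normalize:
  fixes L M :: "'n \<Rightarrow> 'a::field fls"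
  assumes "L j \<noteq> 0"
  shows "subst_var L j (\<lambda>i. (L i - M i) / L j) = M"
  using assms unfolding subst_var_def by auto

lemma lf_eval_subst_var:
  "lf_eval (subst_var L j C) v = lf_eval L v - L j * lf_eval C v"
  unfolding lf_eval_def subst_var_def
  by (simp add: algebra_simps sum_subtractf sum_distrib_left)

lemma lf_eval_shift_var:
  "lf_eval L (v(j := v j + \<sigma>)) = lf_eval L v + fls_const \<sigma> * L j"
proof -
  have "lf_eval L (v(j := v j + \<sigma>)) =
      (\<Sum>i\<in>UNIV. L i * fls_const (v i) + (if i = j then L j * fls_const \<sigma> else 0))"
    unfolding lf_eval_def by (intro sum.cong) (auto simp: distrib_left simp flip: fls_plus_const)
  then show ?thesis
    unfolding lf_eval_def by (simp add: sum.distrib mult.commute)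
qed

lemma rat_linform_subst_var:
  "rat_linform L \<Longrightarrow> (\<And>i. rational_fls (C i)) \<Longrightarrow> rat_linform (subst_var L j C)"
  unfolding rat_linform_def subst_var_def by (simp add: rational_fls_diff rational_fls_mult)

lemma proj_lim_is_subst_var:
  assumes "proj_lim_is L l" and small: "\<And>i. vanishes_below 1 (C i)"
  shows "proj_lim_is (subst_var L j C) l"
proof -
  obtain q c where "l \<noteq> (\<lambda>_. 0)" "c \<noteq> 0" and low: "\<And>i m. m < q \<Longrightarrow> fls_nth (L i) m = 0"
    and lead: "\<And>i. fls_nth (L i) q = c * l i"
    using assms(1) unfolding proj_lim_is_def by blast
  have "vanishes_below (q + 1) (L j * C i)" for i
    using vanishes_below_mult[OF _ small] low unfolding vanishes_below_def by blast
  then have "fls_nth (subst_var L j C i) m = fls_nth (L i) m" if "m \<le> q" for i m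
    using that unfolding subst_var_def vanishes_below_def by simp
  then show ?thesis
    unfolding proj_lim_is_def using \<open>l \<noteq> _\<close> \<open>c \<noteq> 0\<close> low lead
    by (intro conjI exI[of _ q] exI[of _ c]) auto
qed

lemma border_limit_subst_var:
  assumes "border_limit f d r Ls" and small: "\<And>i. vanishes_below 1 (C i)"
  shows "border_limit f d r (\<lambda>k. subst_var (Ls k) j C)"
  unfolding border_limit_def
proof (rule allI)
  fix v
  have no_poles: "vanishes_below 0 (\<Sum>k\<in>{1..r}. (lf_eval (Ls k) v + fls_const \<sigma> * Ls k j) ^ d)"
    for \<sigma>
  proof -
    have "\<forall>m<0. fls_nth (\<Sum>k\<in>{1..r}. lf_eval (Ls k) (v(j := v j + \<sigma>)) ^ d) m = 0"
      using assms(1) unfolding border_limit_def by blast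
    then show ?thesis unfolding lf_eval_shift_var vanishes_below_def .
  qed
  have "vanishes_below 1 (lf_eval C v)"
    unfolding lf_eval_def by (intro vanishes_below_sum vanishes_below_mult_const small)
  then have "vanishes_below 1 (- lf_eval C v)"
    unfolding vanishes_below_def by simp
  moreover have "lf_eval (subst_var (Ls k) j C) v = lf_eval (Ls k) v + (- lf_eval C v) * Ls k j"
    for k
    by (simp add: lf_eval_subst_var)
  ultimately have low: "fls_nth (\<Sum>k\<in>{1..r}. lf_eval (subst_var (Ls k) j C) v ^ d) e =
      fls_nth (\<Sum>k\<in>{1..r}. lf_eval (Ls k) v ^ d) e" if "e \<le> 0" for e
    using power_sum_perturb_low_coeffs[OF no_poles _ that] by presburger
  then show "(\<forall>m<0. fls_nth (\<Sum>k\<in>{1..r}. lf_eval (subst_var (Ls k) j C) v ^ d) m = 0) \<and>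
      fls_nth (\<Sum>k\<in>{1..r}. lf_eval (subst_var (Ls k) j C) v ^ d) 0 = f v"
    using assms(1) unfolding border_limit_def by simp
qed

lemma vanishes_below_leading_correction:
  fixes L :: "'n \<Rightarrow> 'a::field fls"
  assumes low: "\<And>i m. m < q \<Longrightarrow> fls_nth (L i) m = 0"
    and lead: "\<And>i. fls_nth (L i) q = c * l i" and "c \<noteq> 0" "l j \<noteq> 0"
  shows "vanishes_below 1 ((L i - fls_X_intpow q * fls_const (c * l i)) / L j)"
proof -
  have "fls_nth (L j) q \<noteq> 0"
    using lead \<open>c \<noteq> 0\<close> \<open>l j \<noteq> 0\<close> by simp
  then have "L j \<noteq> 0" and "fls_subdegree (L j) = q"
    using low by (auto intro: fls_subdegree_eqI)
  moreover have "vanishes_below (q + 1) (L i - fls_X_intpow q * fls_const (c * l i))"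
    unfolding vanishes_below_def using low lead
    by (auto simp: fls_X_intpow_times_conv_shift less_le)
  ultimately show ?thesis
    using vanishes_below_divide by fastforce
qed

theorem lemma6:
  fixes f :: "('n::finite \<Rightarrow> complex) \<Rightarrow> complex" and d r :: nat
    and Ls :: "nat \<Rightarrow> 'n \<Rightarrow> complex fls" and l :: "'n \<Rightarrow> complex"
  assumes "r \<ge> 1"
    and "local_border_decomp f d r Ls l"
  shows "\<exists>Ls' :: nat \<Rightarrow> 'n \<Rightarrow> complex fls.
           local_border_decomp f d r Ls' l \<and> standard_first Ls' l"
proof -
  have rat: "\<And>k. k \<in> {1..r} \<Longrightarrow> rat_linform (Ls k)" and lim: "border_limit f d r Ls"
    and base: "\<And>k. k \<in> {1..r} \<Longrightarrow> proj_lim_is (Ls k) l"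
    using assms(2) unfolding local_border_decomp_def by auto
  obtain q c where "l \<noteq> (\<lambda>_. 0)" "c \<noteq> 0" and low: "\<And>i m. m < q \<Longrightarrow> fls_nth (Ls 1 i) m = 0"
    and lead: "\<And>i. fls_nth (Ls 1 i) q = c * l i"
    using base[of 1] assms(1) unfolding proj_lim_is_def by auto
  then obtain j where "l j \<noteq> 0" by fastforce
  define M where "M i = fls_X_intpow q * fls_const (c * l i)" for i
  define C where "C i = (Ls 1 i - M i) / Ls 1 j" for i
  have small: "vanishes_below 1 (C i)" for i
    unfolding C_def M_def using low lead \<open>c \<noteq> 0\<close> \<open>l j \<noteq> 0\<close>
    by (rule vanishes_below_leading_correction)
  have "Ls 1 j \<noteq> 0"
    using lead[of j] \<open>c \<noteq> 0\<close> \<open>l j \<noteq> 0\<close> by auto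
  have "subst_var (Ls 1) j C = M"
    unfolding C_def using \<open>Ls 1 j \<noteq> 0\<close> by (rule subst_var_normalize)
  then have "standard_first (\<lambda>k. subst_var (Ls k) j C) l"
    unfolding standard_first_def M_def by auto
  moreover have "rational_fls (C i)" for i
    using rat[of 1] assms(1) unfolding C_def M_def rat_linform_def
    by (simp add: rational_fls_divide rational_fls_diff rational_fls_mult rational_fls_X_intpow
        rational_fls_const)
  then have "local_border_decomp f d r (\<lambda>k. subst_var (Ls k) j C) l"
    using rat base lim small unfolding local_border_decomp_def
    by (simp add: rat_linform_subst_var proj_lim_is_subst_var border_limit_subst_var)
  ultimately show ?thesis by blast
qed

end
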